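(* Let $n > 0$ and $i_n = 2|W_{n-1}| + 1$. Then $$d_0(W,\sigma^{i_n} W) = \frac16 + \frac{1}{2\cdot 3^n} \qquad\text{and}\qquad d(W,\sigma^{i_n}W) = \frac29 + \frac{2}{3^{n+1}}.$$ In particular the bound $\frac29$ in $d(W,\sigma^iW)>\frac29$ (for all $i>0$) cannot be improved.
   Context: Words are finite strings over $\{0,1\}$; $\alpha(i)$ is the $i$-th letter and $|\alpha|$ the length. Define $W_0 = 0$, $W_{m+1} = W_m W_m 1 W_m$, and let $W=W(0)W(1)\cdots$ (indexed from $0$) be the unique infinite word having every $W_m$ as an initial segment. For words $\alpha,\beta$ of equal length, $d(\alpha,\beta) = |\{i:\alpha(i)\ne\beta(i)\}|/|\alpha|$, and (if $\alpha$ contains a $0$) $d_0(\alpha,\beta) = |\{i : \alpha(i)=0,\ \beta(i)=1\}|/|\{i:\alpha(i)=0\}|$. For $i>0$ and $m\ge0$ let $\alpha_m$ be the subword of $W$ of length $|W_m|$ starting at position $i$, and set $d(W,\sigma^iW) = \lim_{m\to\infty} d(W_m,\alpha_m)$ and $d_0(W,\sigma^iW) = \lim_{m\to\infty} d_0(W_m,\alpha_m)$. *)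

theory Defs
  imports Complex_Main
begin

fun Wfin :: "nat \<Rightarrow> nat list" where
  "Wfin 0 = [0]"
| "Wfin (Suc m) = Wfin m @ Wfin m @ [1] @ Wfin m"

definition Winf :: "nat \<Rightarrow> nat" where
  "Winf = (THE w. \<forall>m. \<forall>j < length (Wfin m). w j = Wfin m ! j)"

definition dist_w :: "nat list \<Rightarrow> nat list \<Rightarrow> real" where
  "dist_w a b = real (card {i. i < length a \<and> a ! i \<noteq> b ! i}) / real (length a)"

definition dist0_w :: "nat list \<Rightarrow> nat list \<Rightarrow> real" where
  "dist0_w a b = real (card {i. i < length a \<and> a ! i = 0 \<and> b ! i = 1})
                 / real (card {i. i < length a \<and> a ! i = 0})"

definition alpha_w :: "nat \<Rightarrow> nat \<Rightarrow> nat list" where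
  "alpha_w i m = map (\<lambda>j. Winf (i + j)) [0..<length (Wfin m)]"

end

theory Submission
  imports Defs
begin

text \<open>Write \<open>L\<^sub>m = |W\<^sub>m|\<close>, so that \<open>2L\<^sub>m + 1 = 3\<^sup>m\<^sup>+\<^sup>1\<close>, and \<open>O\<^sub>m = (3\<^sup>m - 1)/2\<close> for the number
  of ones in \<open>W\<^sub>m\<close>. Since \<open>W\<close> repeats \<open>W\<^sub>m\<close> at the offsets \<open>L\<^sub>m\<close> and \<open>2L\<^sub>m + 1\<close>, every window
  of \<open>W\<close> that matters is a concatenation of copies of \<open>W\<^sub>p\<close> and single letters \<open>1\<close>.
  For the shift \<open>i = 2L\<^sub>p + 1\<close> let \<open>C\<^sub>m\<close> count the positions where both \<open>W\<^sub>m\<close> and \<open>\<alpha>\<^sub>m\<close>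
  carry a \<open>1\<close>. Splitting \<open>W\<^sub>m\<^sub>+\<^sub>1 = W\<^sub>m W\<^sub>m 1 W\<^sub>m\<close> gives \<open>C\<^sub>p\<^sub>+\<^sub>1 = 2O\<^sub>p\<close> and \<open>C\<^sub>m\<^sub>+\<^sub>1 = 3C\<^sub>m + 1\<close>
  for \<open>m > p\<close>: the pairs that are not copies of pairs counted in \<open>C\<^sub>m\<close> compare \<open>W\<^sub>p 1 W\<^sub>p\<close>
  with \<open>W\<^sub>p W\<^sub>p 1\<close> or with \<open>1 W\<^sub>p W\<^sub>p\<close>, and as \<open>W\<close> has no two adjacent ones both comparisons
  contribute exactly \<open>O\<^sub>p\<close>. Since \<open>\<alpha>\<^sub>m\<close> also has \<open>O\<^sub>m\<close> ones, \<open>O\<^sub>m - C\<^sub>m\<close> positions have a \<open>0\<close>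
  in \<open>W\<^sub>m\<close> and a \<open>1\<close> in \<open>\<alpha>\<^sub>m\<close>, twice that many are mismatches, and \<open>W\<^sub>m\<close> has \<open>3\<^sup>m\<close> zeros;
  the closed form of \<open>C\<^sub>m\<close> turns these into the two limits.\<close>

definition common_ones :: "nat list \<Rightarrow> nat list \<Rightarrow> nat" where
  "common_ones xs ys = count_list (zip xs ys) (1, 1)"

lemma common_ones_append:
  "length xs = length us \<Longrightarrow>
     common_ones (xs @ ys) (us @ vs) = common_ones xs us + common_ones ys vs"
  by (simp add: common_ones_def)

lemma common_ones_Cons [simp]:
  "common_ones (x # xs) (y # ys) = of_bool (x = 1 \<and> y = 1) + common_ones xs ys"
  by (simp add: common_ones_def)

lemma common_ones_self: "common_ones xs xs = count_list xs 1"
  by (induction xs) (auto simp: common_ones_def)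

lemma common_ones_commute: "common_ones xs ys = common_ones ys xs"
  unfolding common_ones_def
  by (induction xs ys rule: list_induct2') auto

lemma common_ones_offset_by_one:
  "successively (\<lambda>x y. \<not> (x = 1 \<and> y = 1)) (x # xs @ [y]) \<Longrightarrow>
     common_ones (x # xs) (xs @ [y]) = 0"
  by (induction xs arbitrary: x) (auto simp: common_ones_def)

lemma common_ones_bracketed:
  assumes "successively (\<lambda>x y. \<not> (x = 1 \<and> y = 1)) (1 # w @ [1])"
  shows "common_ones (w @ [1] @ w) (w @ w @ [1]) = count_list w 1"
    and "common_ones (w @ [1] @ w) ([1] @ w @ w) = count_list w 1"
proof -
  have offset: "common_ones (1 # w) (w @ [1]) = 0"
    using common_ones_offset_by_one[OF assms] .
  show "common_ones (w @ [1] @ w) (w @ w @ [1]) = count_list w 1"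
    using common_ones_append[of w w "1 # w" "w @ [1]"] offset by (simp add: common_ones_self)
  show "common_ones (w @ [1] @ w) ([1] @ w @ w) = count_list w 1"
    using common_ones_append[of "w @ [1]" "1 # w" w w] offset
    by (simp add: common_ones_self common_ones_commute)
qed

lemma card_nth_pairs:
  "length xs = length ys \<Longrightarrow>
     card {k. k < length xs \<and> P (xs ! k) (ys ! k)}
       = length (filter (\<lambda>(x, y). P x y) (zip xs ys))"
  unfolding length_filter_conv_card by (rule arg_cong[where f = card]) (auto simp: nth_zip)

lemma card_zero_one:
  assumes "length xs = length ys" "set xs \<subseteq> {0, 1}" "set ys \<subseteq> {0, 1}"
  shows "card {k. k < length xs \<and> xs ! k = 0 \<and> ys ! k = 1} + common_ones xs ys = count_list ys 1"
  using assms unfolding card_nth_pairs[OF assms(1), of "\<lambda>x y. x = 0 \<and> y = 1"] common_ones_def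
  by (induction xs ys rule: list_induct2) auto

lemma card_mismatch:
  assumes "length xs = length ys" "set xs \<subseteq> {0, 1}" "set ys \<subseteq> {0, 1}"
  shows "card {k. k < length xs \<and> xs ! k \<noteq> ys ! k} + 2 * common_ones xs ys
           = count_list xs 1 + count_list ys 1"
  using assms unfolding card_nth_pairs[OF assms(1), of "\<lambda>x y. x \<noteq> y"] common_ones_def
  by (induction xs ys rule: list_induct2) auto

lemma card_zeros: "card {k. k < length xs \<and> xs ! k = 0} = count_list xs 0"
  by (simp add: count_list_eq_length_filter length_filter_conv_card eq_commute[of 0])

abbreviation Wlen :: "nat \<Rightarrow> nat" where
  "Wlen m \<equiv> length (Wfin m)"

lemma Wlen_gt: "m < Wlen m"
  by (induction m) auto

lemma Wlen_mono: "m \<le> m' \<Longrightarrow> Wlen m \<le> Wlen m'"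
  by (induction rule: dec_induct) auto

lemma Wlen_pow3: "2 * Wlen m + 1 = 3 ^ Suc m"
  by (induction m) auto

lemma Wfin_prefix: "m \<le> m' \<Longrightarrow> \<exists>zs. Wfin m' = Wfin m @ zs"
  by (induction rule: dec_induct) auto

lemma Wfin_suffix: "m \<le> m' \<Longrightarrow> \<exists>zs. Wfin m' = zs @ Wfin m"
  by (induction rule: dec_induct) auto

lemma Winf_eq_nth:
  assumes "j < Wlen m"
  shows "Winf j = Wfin m ! j"
proof -
  have consistent: "Wfin m ! j = Wfin m' ! j" if "j < Wlen m" "j < Wlen m'" for m m' j
  proof -
    obtain zs zs' where zs: "Wfin (max m m') = Wfin m @ zs" and zs': "Wfin (max m m') = Wfin m' @ zs'"
      using Wfin_prefix[of m "max m m'"] Wfin_prefix[of m' "max m m'"] by auto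
    have "Wfin m ! j = Wfin (max m m') ! j"
      unfolding zs using that(1) by (simp add: nth_append)
    also have "\<dots> = Wfin m' ! j"
      unfolding zs' using that(2) by (simp add: nth_append)
    finally show ?thesis .
  qed
  have "Winf = (\<lambda>j. Wfin j ! j)"
    unfolding Winf_def
  proof (rule the_equality)
    show "\<forall>m. \<forall>j < Wlen m. Wfin j ! j = Wfin m ! j"
      using consistent Wlen_gt by blast
  next
    fix w assume "\<forall>m. \<forall>j < Wlen m. w j = Wfin m ! j"
    then show "w = (\<lambda>j. Wfin j ! j)"
      using Wlen_gt by blast
  qed
  then have "Winf j = Wfin j ! j"
    by (rule fun_cong[where x = j, THEN trans]) simp
  also have "\<dots> = Wfin m ! j"
    using consistent[OF Wlen_gt assms] .
  finally show ?thesis .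
qed

definition window :: "nat \<Rightarrow> nat \<Rightarrow> nat list" where
  "window a len = map (\<lambda>j. Winf (a + j)) [0..<len]"

lemma length_window [simp]: "length (window a len) = len"
  by (simp add: window_def)

lemma nth_window [simp]: "j < len \<Longrightarrow> window a len ! j = Winf (a + j)"
  by (simp add: window_def)

lemma window_Suc_0 [simp]: "window a (Suc 0) = [Winf a]"
  by (simp add: window_def)

lemma window_add: "window a (x + y) = window a x @ window (a + x) y"
  by (rule nth_equalityI) (auto simp: nth_append add.assoc)

lemma window_append_eq:
  assumes "window a (x + y) = xs @ ys" "length xs = x"
  shows "window a x = xs" "window (a + x) y = ys"
  using assms window_add[of a x y] by (metis append_eq_append_conv length_window)+

lemma alpha_w_eq_window: "alpha_w i m = window i (Wlen m)"
  by (simp add: alpha_w_def window_def)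

lemma window_0_Wlen: "window 0 (Wlen m) = Wfin m"
  by (rule nth_equalityI) (simp_all add: Winf_eq_nth)

lemma window_eq_subwindow:
  assumes "window b n = window c n" "a + len \<le> n"
  shows "window (b + a) len = window (c + a) len"
proof (rule nth_equalityI)
  fix j assume "j < length (window (b + a) len)"
  then have "window b n ! (a + j) = window c n ! (a + j)"
    using assms by simp
  then show "window (b + a) len ! j = window (c + a) len ! j"
    using \<open>j < _\<close> assms(2) by (simp add: add.assoc)
qed simp

lemma Winf_blocks:
  "j < Wlen m \<Longrightarrow> Winf (Wlen m + j) = Winf j"
  "Winf (2 * Wlen m) = 1"
  "j < Wlen m \<Longrightarrow> Winf (2 * Wlen m + 1 + j) = Winf j"
  using Winf_eq_nth[of "Wlen m + j" "Suc m"] Winf_eq_nth[of "2 * Wlen m" "Suc m"]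
    Winf_eq_nth[of "2 * Wlen m + 1 + j" "Suc m"] Winf_eq_nth[of j m]
  by (simp_all add: nth_append)

lemma window_blocks:
  "window (Wlen m) (Wlen m) = window 0 (Wlen m)"
  "window (2 * Wlen m + 1) (Wlen m) = window 0 (Wlen m)"
  using Winf_blocks(1,3) by (simp_all add: list_eq_iff_nth_eq)

lemma window_Wlen_shift:
  "a + len \<le> Wlen m \<Longrightarrow> window (Wlen m + a) len = window a len"
  using window_eq_subwindow[OF window_blocks(1)] by simp

lemma window_centre_shift:
  assumes "a + len \<le> 2 * Wlen m"
  shows "window (2 * Wlen m + 1 + a) len = window a len"
proof -
  define L where "L = Wlen m"
  have "window (Wlen (Suc m) + 0) L = window 0 L"
    unfolding L_def by (rule window_Wlen_shift) (simp add: Wlen_mono)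
  moreover have "Wlen (Suc m) + 0 = 2 * L + 1 + L"
    by (simp add: L_def)
  ultimately have tail: "window (2 * L + 1 + L) L = window 0 L"
    by simp
  have "window (2 * L + 1) (L + L) = window (2 * L + 1) L @ window (2 * L + 1 + L) L"
    by (rule window_add)
  also have "\<dots> = window 0 L @ window L L"
    by (simp only: tail window_blocks[of m, folded L_def])
  also have "\<dots> = window 0 (L + L)"
    using window_add[of 0 L L] by simp
  finally have "window (2 * Wlen m + 1) (2 * Wlen m) = window 0 (2 * Wlen m)"
    by (simp only: L_def mult_2)
  from window_eq_subwindow[OF this assms] show ?thesis
    by simp
qed

lemma window_suffix:
  assumes "n \<le> m"
  shows "window (Wlen m - Wlen n) (Wlen n) = Wfin n"
proof -
  obtain zs where zs: "Wfin m = zs @ Wfin n"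
    using Wfin_suffix[OF assms] by blast
  have "window 0 (length zs + Wlen n) = zs @ Wfin n"
    using window_0_Wlen[of m] by (simp add: zs)
  then have "window (0 + length zs) (Wlen n) = Wfin n"
    by (rule window_append_eq) simp
  then show ?thesis
    by (simp add: zs)
qed

lemma window_Wfin_Suc_split:
  "window 0 (2 * Wlen p + 1) = Wfin p @ Wfin p @ [1]"
  "window (Wlen p) (2 * Wlen p + 1) = Wfin p @ [1] @ Wfin p"
proof -
  have "Wlen (Suc p) = (2 * Wlen p + 1) + Wlen p" "Wlen (Suc p) = Wlen p + (2 * Wlen p + 1)"
    by simp_all
  then have prefix: "window 0 ((2 * Wlen p + 1) + Wlen p) = (Wfin p @ Wfin p @ [1]) @ Wfin p"
    and suffix: "window 0 (Wlen p + (2 * Wlen p + 1)) = Wfin p @ (Wfin p @ [1] @ Wfin p)"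
    using window_0_Wlen[of "Suc p"] by (simp_all only: Wfin.simps append_assoc)
  show "window 0 (2 * Wlen p + 1) = Wfin p @ Wfin p @ [1]"
    by (rule window_append_eq(1)[OF prefix]) simp
  show "window (Wlen p) (2 * Wlen p + 1) = Wfin p @ [1] @ Wfin p"
    using window_append_eq(2)[OF suffix] by simp
qed

lemma window_suffix_shift:
  assumes "Suc p \<le> m"
  shows "window (Wlen m - (2 * Wlen p + 1)) (2 * Wlen p + 1) = Wfin p @ [1] @ Wfin p"
proof -
  have "window (Wlen m - Wlen (Suc p)) (Wlen (Suc p)) = window 0 (Wlen (Suc p))"
    using window_suffix[OF assms] by (simp only: window_0_Wlen)
  then have "window (Wlen m - Wlen (Suc p) + Wlen p) (2 * Wlen p + 1) = window (0 + Wlen p) (2 * Wlen p + 1)"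
    by (rule window_eq_subwindow) simp
  moreover have "Wlen m - Wlen (Suc p) + Wlen p = Wlen m - (2 * Wlen p + 1)"
    using Wlen_mono[OF assms] by simp
  ultimately show ?thesis
    using window_Wfin_Suc_split(2) by simp
qed

lemma Wfin_binary: "set (Wfin m) \<subseteq> {0, 1}"
  by (induction m) auto

lemma Winf_binary: "Winf j \<in> {0, 1}"
proof -
  have "Winf j \<in> set (Wfin j)"
    unfolding Winf_eq_nth[OF Wlen_gt] by (rule nth_mem[OF Wlen_gt])
  then show ?thesis
    using Wfin_binary by blast
qed

lemma window_binary: "set (window a len) \<subseteq> {0, 1}"
  unfolding window_def set_map image_subset_iff using Winf_binary by blast

lemma Wfin_not_Nil [simp]: "Wfin m \<noteq> []"
  by (cases m) auto

lemma hd_Wfin: "hd (Wfin m) = 0"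
  by (induction m) auto

lemma last_Wfin: "last (Wfin m) = 0"
  by (induction m) auto

lemma Wfin_no_adjacent_ones: "successively (\<lambda>x y. \<not> (x = 1 \<and> y = 1)) (Wfin m)"
proof (induction m)
  case (Suc m)
  then show ?case
    by (simp only: Wfin.simps successively_append_iff) (simp add: hd_Wfin last_Wfin)
qed simp

lemma Wfin_bracketed_no_adjacent_ones:
  "successively (\<lambda>x y. \<not> (x = 1 \<and> y = 1)) (1 # Wfin p @ [1])"
  using Wfin_no_adjacent_ones[of p]
  by (simp add: successively_append_iff successively_Cons hd_Wfin last_Wfin)

lemma count_Wfin_zeros: "count_list (Wfin m) 0 = 3 ^ m"
  by (induction m) auto

lemma count_Wfin_ones: "2 * count_list (Wfin m) 1 + 1 = 3 ^ m"
  by (induction m) auto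

lemma count_window_ones:
  assumes "i \<le> Wlen m"
  shows "count_list (window i (Wlen m)) 1 = count_list (Wfin m) 1"
proof -
  have "window (Wlen m + 0) i = window 0 i"
    by (rule window_Wlen_shift) (simp add: assms)
  then have "window i (Wlen m) = window i (Wlen m - i) @ window 0 i"
    using window_add[of i "Wlen m - i" i] assms by simp
  moreover have "Wfin m = window 0 i @ window i (Wlen m - i)"
    using window_add[of 0 i "Wlen m - i"] assms by (simp add: window_0_Wlen)
  ultimately show ?thesis
    by (metis add.commute count_list_append)
qed

lemma shift_window_decomposition:
  fixes p m :: nat
  defines "L \<equiv> Wlen m" and "i \<equiv> 2 * Wlen p + 1"
  assumes "Suc p \<le> m"
  shows "Wfin m = window 0 (L - i) @ Wfin p @ [1] @ Wfin p"
    and "window i L = window i (L - i) @ Wfin p @ Wfin p @ [1]"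
    and "window (i + L) L = window i (L - i) @ [1] @ Wfin p @ Wfin p"
    and "window (i + 2 * L) 1 = [1]"
    and "window (i + 2 * L + 1) L = window i L"
proof -
  have "i + Wlen p \<le> L"
    using Wlen_mono[OF assms(3)] by (simp add: L_def i_def)
  then have iL: "i + Wlen p \<le> L" "i \<le> L" "2 * Wlen p < L"
    by (simp_all add: i_def)
  show "Wfin m = window 0 (L - i) @ Wfin p @ [1] @ Wfin p"
    using window_add[of 0 "L - i" i] window_suffix_shift[OF assms(3)] iL
    by (simp add: L_def i_def window_0_Wlen)
  show "window i L = window i (L - i) @ Wfin p @ Wfin p @ [1]"
    using window_add[of i "L - i" i] window_Wlen_shift[of 0 i m] window_Wfin_Suc_split(1)[of p] iL
    by (simp add: L_def i_def)
  have "window (L + i) (L - i) = window i (L - i)"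
    using window_Wlen_shift[of i "L - i" m] iL by (simp add: L_def)
  moreover have "window (2 * L + 1) (2 * Wlen p) = Wfin p @ Wfin p"
    using window_centre_shift[of 0 "2 * Wlen p" m] window_append_eq(1)[of 0 "2 * Wlen p" 1]
      window_Wfin_Suc_split(1)[of p] iL by (simp add: L_def)
  moreover have "window (i + L) L
      = window (L + i) (L - i) @ window (2 * L) 1 @ window (2 * L + 1) (2 * Wlen p)"
    using window_add[of "i + L" "L - i" "1 + 2 * Wlen p"] window_add[of "2 * L" 1 "2 * Wlen p"] iL
    by (simp add: i_def add.commute add.left_commute mult_2)
  ultimately show "window (i + L) L = window i (L - i) @ [1] @ Wfin p @ Wfin p"
    using Winf_blocks(2)[of m] by (simp add: L_def)
  show "window (i + 2 * L) 1 = [1]"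
    using Winf_blocks(3)[of "2 * Wlen p" m] Winf_blocks(2)[of p] iL
    by (simp add: L_def i_def add.commute add.left_commute)
  show "window (i + 2 * L + 1) L = window i L"
    using window_centre_shift[of i L m] iL by (simp add: L_def add.commute add.left_commute)
qed

definition shift_overlap :: "nat \<Rightarrow> nat \<Rightarrow> nat" where
  "shift_overlap p m = common_ones (Wfin m) (window (2 * Wlen p + 1) (Wlen m))"

lemma shift_overlap_base: "shift_overlap p (Suc p) = 2 * count_list (Wfin p) 1"
proof -
  define L i where "L = Wlen p" and "i = 2 * Wlen p + 1"
  have len: "Wlen (Suc p) = L + i" "i + L = Wlen (Suc p) + 0"
    by (simp_all add: L_def i_def)
  have "window i L = Wfin p"
    using window_blocks(2)[of p] by (simp add: L_def i_def window_0_Wlen)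
  moreover have "window (Wlen (Suc p) + 0) i = window 0 i"
    by (rule window_Wlen_shift) (simp add: i_def)
  ultimately have "window i (Wlen (Suc p)) = Wfin p @ Wfin p @ Wfin p @ [1]"
    using window_Wfin_Suc_split(1)[of p, folded i_def] by (simp only: len window_add append_assoc)
  then show ?thesis
    unfolding shift_overlap_def i_def[symmetric]
    using common_ones_offset_by_one[OF Wfin_bracketed_no_adjacent_ones[of p]]
    by (simp add: common_ones_append common_ones_self)
qed

lemma shift_overlap_step:
  assumes "Suc p \<le> m"
  shows "shift_overlap p (Suc m) = 3 * shift_overlap p m + 1"
proof -
  define L i where "L = Wlen m" and "i = 2 * Wlen p + 1"
  define V U where "V = window 0 (L - i)" and "U = window i (L - i)"
  note windows = shift_window_decomposition[OF assms, folded L_def i_def, folded V_def U_def]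
  have "length V = length U"
    by (simp add: V_def U_def)
  then have first: "common_ones (Wfin m) (window i L) = common_ones V U + count_list (Wfin p) 1"
    and second: "common_ones (Wfin m) (window (i + L) L) = common_ones V U + count_list (Wfin p) 1"
    using common_ones_bracketed[OF Wfin_bracketed_no_adjacent_ones[of p]]
    by (simp_all only: windows(1-3) common_ones_append)
  have "window i (Wlen (Suc m))
          = window i L @ window (i + L) L @ window (i + 2 * L) 1 @ window (i + 2 * L + 1) L"
    using window_add[of i "L + L + 1" L] window_add[of i "L + L" 1] window_add[of i L L]
    by (simp add: L_def mult_2 add.assoc)
  then have "window i (Wlen (Suc m)) = window i L @ window (i + L) L @ [1] @ window i L"
    by (simp only: windows(4,5))
  then show ?thesis
    using first second by (simp add: shift_overlap_def L_def i_def common_ones_append)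
qed

lemma shift_overlap_closed_form: "2 * shift_overlap p (Suc p + t) + 3 ^ t + 1 = 2 * 3 ^ (p + t)"
proof (induction t)
  case 0
  then show ?case
    using shift_overlap_base[of p] count_Wfin_ones[of p] by simp
next
  case (Suc t)
  then show ?case
    using shift_overlap_step[of p "Suc p + t"] by simp
qed

lemma shift_counts:
  fixes p t :: nat
  defines "m \<equiv> Suc p + t" and "i \<equiv> 2 * Wlen p + 1"
  shows "2 * card {k. k < Wlen m \<and> Wfin m ! k = 0 \<and> alpha_w i m ! k = 1} = 3 ^ (p + t) + 3 ^ t"
    and "card {k. k < Wlen m \<and> Wfin m ! k \<noteq> alpha_w i m ! k} = 3 ^ (p + t) + 3 ^ t"
    and "card {k. k < Wlen m \<and> Wfin m ! k = 0} = 3 ^ m"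
proof -
  have "i \<le> Wlen m"
    using Wlen_mono[of "Suc p" m] by (simp add: m_def i_def)
  then have ones_alpha: "count_list (alpha_w i m) 1 = count_list (Wfin m) 1"
    unfolding alpha_w_eq_window by (rule count_window_ones)
  have binary: "length (Wfin m) = length (alpha_w i m)" "set (Wfin m) \<subseteq> {0, 1}"
    "set (alpha_w i m) \<subseteq> {0, 1}"
    unfolding alpha_w_eq_window by (simp, rule Wfin_binary, rule window_binary)
  have ones: "2 * count_list (Wfin m) 1 + 1 = 3 * 3 ^ (p + t)"
    using count_Wfin_ones[of m] by (simp add: m_def)
  have overlap: "2 * common_ones (Wfin m) (alpha_w i m) + 3 ^ t + 1 = 2 * 3 ^ (p + t)"
    using shift_overlap_closed_form[of p t] by (simp add: shift_overlap_def m_def i_def alpha_w_eq_window)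
  show "2 * card {k. k < Wlen m \<and> Wfin m ! k = 0 \<and> alpha_w i m ! k = 1} = 3 ^ (p + t) + 3 ^ t"
    using card_zero_one[OF binary] ones_alpha ones overlap by linarith
  show "card {k. k < Wlen m \<and> Wfin m ! k \<noteq> alpha_w i m ! k} = 3 ^ (p + t) + 3 ^ t"
    using card_mismatch[OF binary] ones_alpha ones overlap by linarith
  show "card {k. k < Wlen m \<and> Wfin m ! k = 0} = 3 ^ m"
    by (simp add: card_zeros count_Wfin_zeros)
qed

lemma dist0_w_shift:
  "dist0_w (Wfin (Suc p + t)) (alpha_w (2 * Wlen p + 1) (Suc p + t)) = 1/6 + 1 / (2 * 3 ^ Suc p)"
proof -
  have "2 * real (card {k. k < Wlen (Suc p + t) \<and> Wfin (Suc p + t) ! k = 0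
            \<and> alpha_w (2 * Wlen p + 1) (Suc p + t) ! k = 1}) = 3 ^ p * 3 ^ t + 3 ^ t"
    using arg_cong[OF shift_counts(1)[of p t], of real] by (simp add: power_add)
  moreover have "real (card {k. k < Wlen (Suc p + t) \<and> Wfin (Suc p + t) ! k = 0}) = 3 * 3 ^ p * 3 ^ t"
    using arg_cong[OF shift_counts(3)[of p t], of real] by (simp add: power_add)
  ultimately show ?thesis
    unfolding dist0_w_def by (simp add: field_simps)
qed

lemma dist_w_shift:
  "dist_w (Wfin (Suc p + t)) (alpha_w (2 * Wlen p + 1) (Suc p + t))
     = 2 * (3 ^ p + 1) / (9 * 3 ^ p - (1/3) ^ t)"
proof -
  define a x :: real where "a = 3 ^ p" and "x = 3 ^ t"
  have "a \<ge> 1" "x \<ge> 1"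
    by (simp_all add: a_def x_def)
  then have "1 \<le> a * x" "1 / x \<le> 1"
    using mult_mono[of 1 a 1 x] by simp_all
  then have pos: "9 * a * x - 1 > 0" "9 * a - 1 / x > 0"
    using \<open>a \<ge> 1\<close> by linarith+
  have mismatches: "real (card {k. k < Wlen (Suc p + t)
      \<and> Wfin (Suc p + t) ! k \<noteq> alpha_w (2 * Wlen p + 1) (Suc p + t) ! k}) = a * x + x"
    using arg_cong[OF shift_counts(2)[of p t], of real] by (simp add: a_def x_def power_add)
  have length: "real (Wlen (Suc p + t)) = (9 * a * x - 1) / 2"
    using arg_cong[OF Wlen_pow3[of "Suc p + t"], of real] by (simp add: a_def x_def power_add)
  have "dist_w (Wfin (Suc p + t)) (alpha_w (2 * Wlen p + 1) (Suc p + t))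
      = (a * x + x) / ((9 * a * x - 1) / 2)"
    unfolding dist_w_def by (simp only: mismatches length)
  also have "\<dots> = 2 * (a + 1) / (9 * a - 1 / x)"
    using pos \<open>x \<ge> 1\<close> by (simp add: field_simps)
  also have "\<dots> = 2 * (3 ^ p + 1) / (9 * 3 ^ p - (1/3) ^ t)"
    by (simp add: a_def x_def power_one_over)
  finally show ?thesis .
qed

lemma dist0_w_shift_limit:
  "(\<lambda>m. dist0_w (Wfin m) (alpha_w (2 * Wlen p + 1) m)) \<longlonglongrightarrow> 1/6 + 1 / (2 * 3 ^ Suc p)"
proof (rule LIMSEQ_offset[where k = "Suc p"])
  have "(\<lambda>t. dist0_w (Wfin (t + Suc p)) (alpha_w (2 * Wlen p + 1) (t + Suc p)))
          = (\<lambda>t. 1/6 + 1 / (2 * 3 ^ Suc p))"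
    using dist0_w_shift[of p] by (simp only: add.commute)
  then show "(\<lambda>t. dist0_w (Wfin (t + Suc p)) (alpha_w (2 * Wlen p + 1) (t + Suc p)))
               \<longlonglongrightarrow> 1/6 + 1 / (2 * 3 ^ Suc p)"
    by (simp only: tendsto_const)
qed

lemma dist_w_shift_limit:
  "(\<lambda>m. dist_w (Wfin m) (alpha_w (2 * Wlen p + 1) m)) \<longlonglongrightarrow> 2/9 + 2 / 3 ^ (p + 2)"
proof (rule LIMSEQ_offset[where k = "Suc p"])
  have "(\<lambda>t. dist_w (Wfin (t + Suc p)) (alpha_w (2 * Wlen p + 1) (t + Suc p)))
          = (\<lambda>t. 2 * (3 ^ p + 1) / (9 * 3 ^ p - (1/3) ^ t))"
    using dist_w_shift[of p] by (simp only: add.commute)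
  moreover have "(\<lambda>t. 2 * (3 ^ p + 1) / (9 * 3 ^ p - (1/3) ^ t))
      \<longlonglongrightarrow> 2 * (3 ^ p + 1) / (9 * 3 ^ p - (0::real))"
    by (intro tendsto_intros LIMSEQ_realpow_zero) simp_all
  moreover have "2 * (3 ^ p + 1) / (9 * 3 ^ p - (0::real)) = 2/9 + 2 / 3 ^ (p + 2)"
    by (simp add: field_simps)
  ultimately show "(\<lambda>t. dist_w (Wfin (t + Suc p)) (alpha_w (2 * Wlen p + 1) (t + Suc p)))
                  \<longlonglongrightarrow> 2/9 + 2 / 3 ^ (p + 2)"
    by (simp only:)
qed

lemma dist_w_limit_arbitrarily_close:
  fixes \<epsilon> :: real
  assumes "\<epsilon> > 0"
  shows "\<exists>i>0. convergent (\<lambda>m. dist_w (Wfin m) (alpha_w i m))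
           \<and> lim (\<lambda>m. dist_w (Wfin m) (alpha_w i m)) < 2/9 + \<epsilon>"
proof -
  obtain q where q: "(1/3) ^ q < \<epsilon>"
    using real_arch_pow_inv[of \<epsilon> "1/3"] assms by auto
  have "2 / 3 ^ (q + 2) = (2/9) * (1/3 :: real) ^ q"
    by (simp add: power_one_over power_add)
  also have "\<dots> < \<epsilon>"
    using q zero_le_power[of "1/3 :: real" q] by linarith
  finally have "2/9 + 2 / 3 ^ (q + 2) < 2/9 + \<epsilon>"
    by simp
  then show ?thesis
    using dist_w_shift_limit[of q]
    by (intro exI[of _ "2 * Wlen q + 1"]) (auto intro: convergentI simp: limI)
qed

theorem proposition2:
  fixes n :: nat
  assumes "n > 0"
  defines "i\<^sub>n \<equiv> 2 * length (Wfin (n - 1)) + 1"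
  shows "((\<lambda>m. dist0_w (Wfin m) (alpha_w i\<^sub>n m)) \<longlonglongrightarrow> 1/6 + 1 / (2 * 3 ^ n))
    \<and> ((\<lambda>m. dist_w (Wfin m) (alpha_w i\<^sub>n m)) \<longlonglongrightarrow> 2/9 + 2 / 3 ^ (n + 1))
    \<and> (\<forall>\<epsilon>>0. \<exists>i>0. convergent (\<lambda>m. dist_w (Wfin m) (alpha_w i m))
             \<and> lim (\<lambda>m. dist_w (Wfin m) (alpha_w i m)) < 2/9 + \<epsilon>)"
proof -
  obtain p where n: "n = Suc p"
    using assms(1) gr0_conv_Suc by blast
  have "(\<lambda>m. dist0_w (Wfin m) (alpha_w i\<^sub>n m)) \<longlonglongrightarrow> 1/6 + 1 / (2 * 3 ^ n)"
    using dist0_w_shift_limit[of p] by (simp add: i\<^sub>n_def n)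
  moreover have "(\<lambda>m. dist_w (Wfin m) (alpha_w i\<^sub>n m)) \<longlonglongrightarrow> 2/9 + 2 / 3 ^ (n + 1)"
    using dist_w_shift_limit[of p] by (simp add: i\<^sub>n_def n)
  ultimately show ?thesis
    using dist_w_limit_arbitrarily_close by blast
qed

end
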